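(* Let $\mathbf b=(b_1,b_2)\in\mathbb N^2$ with $\gcd(b_1,b_2)=1$. Let $m,J\in\mathbb N$, $0<\alpha<1$, and $\mathbf s=(s_1,\dots,s_J)$, $\mathbf t=(t_1,\dots,t_J)\in\mathbb Z^J$ such that $\gcd_{\mathbf b}(s_{j_1}-s_{j_2},t_{j_1}-t_{j_2})=1$ for all $1\le j_1\ne j_2\le J$. Then for every integer $n>\max_{1\le j\le J}|s_j|$ and every $\varepsilon>0$, $$\sum_{\substack{0\le k\le m\\ \gcd_{\mathbf b}(n-s_j,\,k-t_j)=1,\ 1\le j\le J}}\binom mk\alpha^k(1-\alpha)^{m-k}=f_{\mathbf b,\mathbf s}(n)+O_{\alpha,J,\varepsilon}\big(n^{\varepsilon}m^{-1/2}\big),$$ where $$f_{\mathbf b,\mathbf s}(n)=\sum_{\substack{d_1,\dots,d_J\in\mathbb N,\ d_j^{b_1}\mid n-s_j\ (1\le j\le J)\\ \gcd(d_{j_1},d_{j_2})=1\ \forall\, 1\le j_1\ne j_2\le J}}\frac{\mu(d_1)\cdots\mu(d_J)}{(d_1\cdots d_J)^{b_2}}.$$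
   Context: For integers $m,n$ not both zero, $\gcd_{\mathbf b}(m,n):=\max\{d\in\mathbb N: d^{b_1}\mid m,\ d^{b_2}\mid n\}$. $\mu$ denotes the Möbius function. *)

theory Defs
  imports "HOL-Computational_Algebra.Computational_Algebra" "HOL-Library.FuncSet"
begin

definition moebius_mu :: "nat \<Rightarrow> int" where
  "moebius_mu d = (if d = 0 then 0 else if squarefree d then (-1) ^ card (prime_factors d) else 0)"

text \<open>gcd_b(m,n) = max{d in N : d^b1 | m, d^b2 | n}; for m = n = 0 (where the paper's
  definition is not applicable) we set the value 0.\<close>
definition gcdb :: "nat \<Rightarrow> nat \<Rightarrow> int \<Rightarrow> int \<Rightarrow> nat" where
  "gcdb b1 b2 m n = (if m = 0 \<and> n = 0 then 0
      else Max {d::nat. d \<ge> 1 \<and> int d ^ b1 dvd m \<and> int d ^ b2 dvd n})"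

definition fbs :: "nat \<Rightarrow> nat \<Rightarrow> nat \<Rightarrow> (nat \<Rightarrow> int) \<Rightarrow> int \<Rightarrow> real" where
  "fbs b1 b2 J s n =
     (\<Sum>d \<in> {d \<in> {..<J} \<rightarrow>\<^sub>E {1..}.
              (\<forall>j<J. int (d j) ^ b1 dvd n - s j) \<and>
              (\<forall>j1<J. \<forall>j2<J. j1 \<noteq> j2 \<longrightarrow> coprime (d j1) (d j2))}.
        real_of_int (\<Prod>j<J. moebius_mu (d j)) / real (\<Prod>j<J. d j) ^ b2)"

end

theory Submission
  imports Defs "HOL-Number_Theory.Cong"
begin

text \<open>Moebius inversion writes the indicator of gcd_b(n - s_j, k - t_j) = 1 as the sum of mu(d)
  over d with d^b1 dividing n - s_j and d^b2 dividing k - t_j. Expanding the product over j turns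
  the binomial sum into a sum over tuples (d_1, ..., d_J) with d_j^b1 dividing n - s_j of
  mu(d_1) ... mu(d_J) times the binomial mass of the k with d_j^b2 dividing k - t_j for all j.
  The hypothesis on s and t makes these congruences incompatible unless the d_j are pairwise
  coprime, and then the Chinese remainder theorem turns them into a single residue class modulo
  Q = (d_1 ... d_J)^b2. As the binomial distribution is unimodal with maximal weight
  O(m^(-1/2)), every residue class modulo Q has mass 1/Q + O(m^(-1/2)). The main terms 1/Q add
  up to f_b,s(n), and the number of tuples is at most the product of the numbers of divisors of
  the n - s_j, which is O(n^epsilon).\<close>


section \<open>Moebius inversion of the condition gcd_b = 1\<close>

lemma finite_pow_dvd:
  fixes x :: int
  assumes "x \<noteq> 0" "b \<ge> 1"
  shows "finite {d::nat. d \<ge> 1 \<and> int d ^ b dvd x}"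
proof (rule finite_subset)
  show "{d::nat. d \<ge> 1 \<and> int d ^ b dvd x} \<subseteq> {..nat \<bar>x\<bar>}"
  proof
    fix d assume d: "d \<in> {d::nat. d \<ge> 1 \<and> int d ^ b dvd x}"
    have "int d \<le> int d ^ b" using d assms by (simp add: self_le_power)
    also have "\<dots> \<le> \<bar>x\<bar>" using d assms by (auto dest: dvd_imp_le_int)
    finally show "d \<in> {..nat \<bar>x\<bar>}" by simp
  qed
qed simp

lemma gcdb_eq_1_iff:
  assumes "b1 \<ge> 1" "b2 \<ge> 1"
  shows "gcdb b1 b2 x y = 1 \<longleftrightarrow> (\<forall>p. prime p \<longrightarrow> \<not> (int p ^ b1 dvd x \<and> int p ^ b2 dvd y))"
proof (cases "x = 0 \<and> y = 0")
  case True
  then show ?thesis using two_is_prime_nat by (auto simp: gcdb_def)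
next
  case False
  define S where "S = {d::nat. d \<ge> 1 \<and> int d ^ b1 dvd x \<and> int d ^ b2 dvd y}"
  have "finite S"
  proof (cases "x = 0")
    case True
    with False have "y \<noteq> 0" by simp
    show ?thesis unfolding S_def
      by (rule finite_subset[OF _ finite_pow_dvd[OF \<open>y \<noteq> 0\<close> assms(2)]]) auto
  next
    case False
    show ?thesis unfolding S_def
      by (rule finite_subset[OF _ finite_pow_dvd[OF \<open>x \<noteq> 0\<close> assms(1)]]) auto
  qed
  have "1 \<in> S" unfolding S_def by simp
  have dvd_closed: "e \<in> S" if "d \<in> S" "e dvd d" "e \<ge> 1" for d e
    using that dvd_trans[OF dvd_power_same[of "int e" "int d"]] unfolding S_def by auto
  have "Max S = 1 \<longleftrightarrow> (\<forall>p. prime p \<longrightarrow> p \<notin> S)"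
  proof
    assume "Max S = 1"
    show "\<forall>p. prime p \<longrightarrow> p \<notin> S"
    proof (intro allI impI notI)
      fix p assume "prime p" "p \<in> S"
      then have "2 \<le> p" "p \<le> Max S" using Max_ge[OF \<open>finite S\<close>] prime_ge_2_nat by auto
      with \<open>Max S = 1\<close> show False by simp
    qed
  next
    assume no_prime: "\<forall>p. prime p \<longrightarrow> p \<notin> S"
    have "Max S \<in> S" using Max_in[OF \<open>finite S\<close>] \<open>1 \<in> S\<close> by blast
    show "Max S = 1"
    proof (rule ccontr)
      assume "Max S \<noteq> 1"
      then obtain p where "prime p" "p dvd Max S" using prime_factor_nat by blast
      then show False using dvd_closed[OF \<open>Max S \<in> S\<close>] no_prime prime_ge_1_nat by blast
    qed
  qed
  moreover from False have "gcdb b1 b2 x y = Max S"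
    unfolding gcdb_def S_def by (simp only: if_False)
  ultimately show ?thesis unfolding S_def using prime_ge_1_nat by auto
qed

lemma coprime_if_gcdb_diff_eq_1:
  fixes x1 x2 y1 y2 n k :: int
  assumes "b1 \<ge> 1" "b2 \<ge> 1" "gcdb b1 b2 (x1 - x2) (y1 - y2) = 1"
    and "int d1 ^ b1 dvd n - x1" "int d2 ^ b1 dvd n - x2"
    and "int d1 ^ b2 dvd k - y1" "int d2 ^ b2 dvd k - y2"
  shows "coprime d1 d2"
proof (rule ccontr)
  assume "\<not> coprime d1 d2"
  then obtain p where p: "prime p" "p dvd gcd d1 d2"
    using prime_factor_nat[of "gcd d1 d2"] by (auto simp: coprime_iff_gcd_eq_1)
  have "int p ^ b dvd int d1 ^ b" "int p ^ b dvd int d2 ^ b" for b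
    using p(2) by (simp_all add: dvd_power_same)
  then have "int p ^ b1 dvd (n - x2) - (n - x1)" "int p ^ b2 dvd (k - y2) - (k - y1)"
    using assms(4-7) by (blast intro: dvd_diff dvd_trans)+
  then have "int p ^ b1 dvd x1 - x2" "int p ^ b2 dvd y1 - y2" by simp_all
  moreover have "\<forall>p. prime p \<longrightarrow> \<not> (int p ^ b1 dvd x1 - x2 \<and> int p ^ b2 dvd y1 - y2)"
    using iffD1[OF gcdb_eq_1_iff[OF assms(1,2)] assms(3)] .
  ultimately show False using p(1) by blast
qed

lemma sum_Pow_neg_one_power_card:
  assumes "finite S" "S \<noteq> {}"
  shows "(\<Sum>T\<in>Pow S. (-1) ^ card T) = (0::'a::ring_1)"
proof (rule sum_alternating_cancels)
  show "card {T \<in> Pow S. even (card T)} = card {T \<in> Pow S. odd (card T)}"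
    using card_subsupersets_even_odd[of S "{}"] assms by auto
qed (use assms in simp)

lemma prime_factors_prod_primes:
  assumes "finite T" "\<forall>p\<in>T. prime p"
  shows "prime_factors (\<Prod>T) = T"
proof -
  have "0 \<notin> id ` T" using assms by auto
  then show ?thesis using assms prime_factors_prod[of T id] by (auto simp: prime_prime_factors)
qed

lemma moebius_mu_prod_primes:
  assumes "finite T" "\<forall>p\<in>T. prime p"
  shows "moebius_mu (\<Prod>T) = (-1) ^ card T"
proof -
  have "squarefree (\<Prod>T)"
    using assms by (intro squarefree_prod_coprime) (auto simp: primes_coprime squarefree_prime)
  moreover have "\<Prod>T \<noteq> 0" using assms by auto
  ultimately show ?thesis using prime_factors_prod_primes[OF assms] unfolding moebius_mu_def by simp
qed

lemma abs_moebius_mu_le_1: "\<bar>moebius_mu d\<bar> \<le> 1"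
  unfolding moebius_mu_def by (auto simp: power_abs)

lemma prod_prime_factors_squarefree:
  fixes d :: nat
  assumes "squarefree d"
  shows "\<Prod>(prime_factors d) = d"
proof -
  have "d \<noteq> 0" using assms by (metis not_squarefree_0)
  then have "d = (\<Prod>p \<in> prime_factors d. p ^ multiplicity p d)" using prime_factorization_nat by auto
  also have "\<dots> = \<Prod>(prime_factors d)"
    using assms squarefree_factorial_semiring'[of d] \<open>d \<noteq> 0\<close> by (intro prod.cong) auto
  finally show ?thesis by simp
qed

lemma prod_primes_power_dvd:
  fixes T :: "nat set" and x :: int
  assumes "finite T" "\<forall>p\<in>T. prime p" "\<forall>p\<in>T. int p ^ b dvd x"
  shows "int (\<Prod>T) ^ b dvd x"
  using assms
proof (induction T rule: finite_induct)
  case (insert p T)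
  have "coprime p (\<Prod>T)"
    using insert by (intro prod_coprime_right) (metis insert_iff primes_coprime)
  then have "coprime (int p) (int (\<Prod>T))" by (simp only: coprime_int_iff)
  then have "coprime (int p ^ b) (int (\<Prod>T) ^ b)" by simp
  moreover have "int (\<Prod>(insert p T)) ^ b = int p ^ b * int (\<Prod>T) ^ b"
    using insert by (simp add: power_mult_distrib)
  ultimately show ?case using insert by (simp add: divides_mult)
qed simp

text \<open>The squarefree elements of the divisor-closed set S correspond to the sets of primes in S,
  so the alternating sum collapses unless S contains no prime.\<close>
lemma sum_moebius_gcdb:
  fixes x y :: int
  assumes "x \<noteq> 0" "b1 \<ge> 1" "b2 \<ge> 1"
  shows "(\<Sum>d | d \<ge> 1 \<and> int d ^ b1 dvd x \<and> int d ^ b2 dvd y. moebius_mu d)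
           = (if gcdb b1 b2 x y = 1 then 1 else 0)"
proof -
  define S where "S = {d::nat. d \<ge> 1 \<and> int d ^ b1 dvd x \<and> int d ^ b2 dvd y}"
  define P where "P = {p\<in>S. prime p}"
  have "finite S" unfolding S_def by (rule finite_subset[OF _ finite_pow_dvd[OF assms(1,2)]]) auto
  then have "finite P" unfolding P_def by simp
  have "(\<Sum>d\<in>S. moebius_mu d) = (\<Sum>d\<in>{d\<in>S. squarefree d}. moebius_mu d)"
    using \<open>finite S\<close> by (intro sum.mono_neutral_right) (auto simp: moebius_mu_def)
  also have "\<dots> = (\<Sum>T\<in>Pow P. (-1) ^ card T)"
  proof (rule sum.reindex_bij_witness[where j = "\<lambda>T. \<Prod>T" and i = prime_factors, symmetric])
    fix T assume T: "T \<in> Pow P"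
    then have "finite T" "\<forall>p\<in>T. prime p" using \<open>finite P\<close> P_def finite_subset by auto
    note T_primes = this
    show "prime_factors (\<Prod>T) = T" using prime_factors_prod_primes[OF T_primes] .
    show "moebius_mu (\<Prod>T) = (-1) ^ card T" using moebius_mu_prod_primes[OF T_primes] .
    have "\<forall>p\<in>T. int p ^ b1 dvd x" "\<forall>p\<in>T. int p ^ b2 dvd y" using T P_def S_def by auto
    moreover have "squarefree (\<Prod>T)" "\<Prod>T \<ge> 1"
      using moebius_mu_prod_primes[OF T_primes] by (auto simp: moebius_mu_def split: if_splits)
    ultimately show "\<Prod>T \<in> {d\<in>S. squarefree d}"
      using prod_primes_power_dvd[OF T_primes] unfolding S_def by auto
  next
    fix d assume d: "d \<in> {d\<in>S. squarefree d}"
    then show "\<Prod>(prime_factors d) = d" using prod_prime_factors_squarefree by simp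
    show "prime_factors d \<in> Pow P"
    proof (rule PowI, rule subsetI)
      fix p assume p: "p \<in> prime_factors d"
      then have "prime p" "p dvd d" by (auto simp: prime_factors_dvd)
      then have "int p ^ b dvd int d ^ b" for b by (simp add: dvd_power_same)
      with d have "int p ^ b1 dvd x" "int p ^ b2 dvd y" unfolding S_def by (auto intro: dvd_trans)
      then show "p \<in> P" using \<open>prime p\<close> prime_ge_1_nat unfolding P_def S_def by simp
    qed
  qed
  also have "\<dots> = (if P = {} then 1 else 0)"
    using sum_Pow_neg_one_power_card[OF \<open>finite P\<close>] by auto
  also have "(P = {}) = (gcdb b1 b2 x y = 1)"
    unfolding gcdb_eq_1_iff[OF assms(2,3)] P_def S_def using prime_ge_1_nat by auto
  finally show ?thesis unfolding S_def by simp
qed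


section \<open>Residue classes of unimodal sequences\<close>

lemma sum_progression_le_shift:
  fixes f :: "nat \<Rightarrow> real"
  assumes "decseq f" "\<And>l. f l \<ge> 0" "e < Q" "e' < Q"
  shows "(\<Sum>i\<le>N. f (e + Q * i)) \<le> f 0 + (\<Sum>i\<le>N. f (e' + Q * i))"
proof (cases N)
  case 0
  then show ?thesis using assms by (simp add: decseqD add_increasing2)
next
  case (Suc n)
  have "(\<Sum>i\<le>N. f (e + Q * i)) = f e + (\<Sum>i\<le>n. f (e + Q * Suc i))"
    unfolding Suc sum.atMost_Suc_shift by simp
  also have "\<dots> \<le> f 0 + (\<Sum>i\<le>n. f (e' + Q * i))"
  proof (intro add_mono sum_mono)
    show "f e \<le> f 0" using assms(1) by (simp add: decseqD)
    fix i
    have "e' + Q * i \<le> e + Q * Suc i" using assms(4) by simp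
    then show "f (e + Q * Suc i) \<le> f (e' + Q * i)" using assms(1) by (simp add: decseqD)
  qed
  also have "\<dots> \<le> f 0 + (\<Sum>i\<le>N. f (e' + Q * i))"
    using Suc assms(2) by (intro add_left_mono sum_mono2) auto
  finally show ?thesis .
qed

lemma sum_residue_class_eq_progression:
  fixes f :: "nat \<Rightarrow> real"
  assumes "Q \<ge> 1" "e < Q" "\<And>l. l > N \<Longrightarrow> f l = 0"
  shows "(\<Sum>l\<le>N. if l mod Q = e then f l else 0) = (\<Sum>i\<le>N. f (e + Q * i))"
proof -
  have "inj_on (\<lambda>i. e + Q * i) {..N}" using assms(1) unfolding inj_on_def by auto
  then have "(\<Sum>i\<le>N. f (e + Q * i)) = (\<Sum>l\<in>(\<lambda>i. e + Q * i) ` {..N}. f l)"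
    by (simp add: sum.reindex)
  also have "\<dots> = (\<Sum>l\<in>{l\<in>{..N}. l mod Q = e}. f l)"
  proof (rule sum.mono_neutral_cong)
    show "f l = 0" if "l \<in> (\<lambda>i. e + Q * i) ` {..N} - {l \<in> {..N}. l mod Q = e}" for l
      using that assms(2,3) by (fastforce simp: not_less[symmetric])
    show "f l = 0" if l: "l \<in> {l \<in> {..N}. l mod Q = e} - (\<lambda>i. e + Q * i) ` {..N}" for l
    proof -
      have "l mod Q = e" using l by simp
      then have "l = e + Q * (l div Q)" using mod_mult_div_eq[of l Q] by linarith
      moreover have "l \<le> N" using l by simp
      then have "l div Q \<le> N" using div_le_dividend[of l Q] by linarith
      ultimately show ?thesis using l by blast
    qed
  qed auto
  also have "\<dots> = (\<Sum>l\<le>N. if l mod Q = e then f l else 0)" by (rule sum.inter_filter) simp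
  finally show ?thesis by simp
qed

text \<open>Shifting the progression of one residue class by a single step makes it dominate every
  other residue class.\<close>
lemma sum_residue_class_decreasing:
  fixes f :: "nat \<Rightarrow> real" and c :: int
  assumes Q: "Q \<ge> 1" and "decseq f" "\<And>l. f l \<ge> 0" and vanish: "\<And>l. l > N \<Longrightarrow> f l = 0"
  shows "\<bar>real Q * (\<Sum>l\<le>N. if int Q dvd int l - c then f l else 0) - (\<Sum>l\<le>N. f l)\<bar> \<le> real Q * f 0"
proof -
  define S where "S e = (\<Sum>l\<le>N. if l mod Q = e then f l else 0)" for e
  define e0 where "e0 = nat (c mod int Q)"
  have "e0 < Q" unfolding e0_def using Q by (simp add: nat_less_iff)
  have "int Q dvd int l - c \<longleftrightarrow> l mod Q = e0" for l
  proof -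
    have "int Q dvd int l - c \<longleftrightarrow> int (l mod Q) = c mod int Q"
      by (simp add: mod_eq_dvd_iff zmod_int)
    also have "\<dots> \<longleftrightarrow> l mod Q = e0" unfolding e0_def using Q by auto
    finally show ?thesis .
  qed
  then have class_sum: "(\<Sum>l\<le>N. if int Q dvd int l - c then f l else 0) = S e0"
    unfolding S_def by simp
  have total: "(\<Sum>l\<le>N. f l) = (\<Sum>e<Q. S e)"
  proof -
    have "(\<Sum>e<Q. S e) = (\<Sum>l\<le>N. \<Sum>e<Q. if l mod Q = e then f l else 0)"
      unfolding S_def by (rule sum.swap)
    also have "\<dots> = (\<Sum>l\<le>N. f l)" using Q by (intro sum.cong refl) simp
    finally show ?thesis by simp
  qed
  have progression: "S e = (\<Sum>i\<le>N. f (e + Q * i))" if "e < Q" for e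
    unfolding S_def using sum_residue_class_eq_progression[OF Q that vanish] .
  have "\<bar>S e0 - S e\<bar> \<le> f 0" if "e < Q" for e
    using sum_progression_le_shift[OF assms(2,3) \<open>e0 < Q\<close> that, of N]
      sum_progression_le_shift[OF assms(2,3) that \<open>e0 < Q\<close>, of N]
    unfolding progression[OF that] progression[OF \<open>e0 < Q\<close>] by linarith
  then have "\<bar>\<Sum>e<Q. S e0 - S e\<bar> \<le> (\<Sum>e<Q. f 0)"
    by (intro order_trans[OF sum_abs] sum_mono) auto
  then show ?thesis unfolding class_sum total by (simp add: sum_subtractf)
qed

lemma sum_atMost_split_reflect:
  fixes h :: "nat \<Rightarrow> 'a::comm_monoid_add"
  assumes "M \<le> m" "\<And>k. k > m \<Longrightarrow> h k = 0"
  shows "(\<Sum>k\<le>m. h k) = (\<Sum>l\<le>m. if l < M then h (M - Suc l) else 0) + (\<Sum>l\<le>m. h (M + l))"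
proof -
  have "(\<Sum>k\<le>m. h k) = (\<Sum>k<M. h k) + (\<Sum>k\<in>{M..<Suc m}. h k)"
    using sum.atLeastLessThan_concat[of 0 M "Suc m" h] assms(1)
    by (simp add: atLeast0LessThan lessThan_Suc_atMost)
  also have "(\<Sum>k<M. h k) = (\<Sum>l<M. h (M - Suc l))" by (rule sum.nat_diff_reindex[symmetric])
  also have "\<dots> = (\<Sum>l\<le>m. if l < M then h (M - Suc l) else 0)"
  proof -
    have "{l\<in>{..m}. l < M} = {..<M}" using assms(1) by auto
    then show ?thesis using sum.inter_filter[of "{..m}" "\<lambda>l. h (M - Suc l)" "\<lambda>l. l < M"] by simp
  qed
  also have "(\<Sum>k\<in>{M..<Suc m}. h k) = (\<Sum>l\<in>{0..<Suc m - M}. h (l + M))"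
    using sum.shift_bounds_nat_ivl[of h 0 M "Suc m - M"] assms(1) by simp
  also have "\<dots> = (\<Sum>l\<le>m. h (M + l))"
    using assms(2) by (intro sum.mono_neutral_cong_left) (auto simp: add.commute)
  finally show ?thesis .
qed

lemma sum_residue_class_split_reflect:
  fixes g :: "nat \<Rightarrow> 'a::comm_monoid_add" and r :: int
  assumes "M \<le> m" "\<And>k. k > m \<Longrightarrow> g k = 0"
  shows "(\<Sum>k\<le>m. if int Q dvd int k - r then g k else 0)
       = (\<Sum>l\<le>m. if int Q dvd int l - (int M - 1 - r) then if l < M then g (M - Suc l) else 0 else 0)
       + (\<Sum>l\<le>m. if int Q dvd int l - (r - int M) then g (M + l) else 0)"
proof (subst sum_atMost_split_reflect[OF assms(1)])
  show "(if int Q dvd int k - r then g k else 0) = 0" if "k > m" for k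
    using assms(2)[OF that] by simp
  have L_iff: "int Q dvd int (M - Suc l) - r \<longleftrightarrow> int Q dvd int l - (int M - 1 - r)" if "l < M" for l
  proof -
    have "int (M - Suc l) - r = - (int l - (int M - 1 - r))" using that by simp
    then show ?thesis by (simp only: dvd_minus_iff)
  qed
  have R_iff: "int Q dvd int (M + l) - r \<longleftrightarrow> int Q dvd int l - (r - int M)" for l
    by (simp add: algebra_simps)
  have "(if l < M then if int Q dvd int (M - Suc l) - r then g (M - Suc l) else 0 else 0)
      = (if int Q dvd int l - (int M - 1 - r) then if l < M then g (M - Suc l) else 0 else 0)" for l
    by (cases "l < M") (simp_all only: L_iff if_True if_False if_cancel)
  then show "(\<Sum>l\<le>m. if l < M then if int Q dvd int (M - Suc l) - r then g (M - Suc l) else 0 else 0)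
      + (\<Sum>l\<le>m. if int Q dvd int (M + l) - r then g (M + l) else 0)
      = (\<Sum>l\<le>m. if int Q dvd int l - (int M - 1 - r) then if l < M then g (M - Suc l) else 0 else 0)
      + (\<Sum>l\<le>m. if int Q dvd int l - (r - int M) then g (M + l) else 0)"
    by (intro arg_cong2[where f = "(+)"] sum.cong refl) (simp_all only: R_iff)
qed

text \<open>Read backwards below M and forwards from M on, g is decreasing.\<close>
lemma sum_residue_class_unimodal:
  fixes g :: "nat \<Rightarrow> real" and r :: int
  assumes Q: "Q \<ge> 1" and "M \<le> m" and nonneg: "\<And>k. g k \<ge> 0"
    and up: "\<And>k. k < M \<Longrightarrow> g k \<le> g (Suc k)" and down: "\<And>k. M \<le> k \<Longrightarrow> g (Suc k) \<le> g k"
    and vanish: "\<And>k. k > m \<Longrightarrow> g k = 0"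
  shows "\<bar>real Q * (\<Sum>k\<le>m. if int Q dvd int k - r then g k else 0) - (\<Sum>k\<le>m. g k)\<bar>
           \<le> 2 * real Q * g M"
proof -
  define fL where "fL l = (if l < M then g (M - Suc l) else 0)" for l
  define fR where "fR l = g (M + l)" for l
  have "decseq fL"
  proof (rule decseq_SucI)
    fix l
    show "fL (Suc l) \<le> fL l"
    proof (cases "Suc l < M")
      case True
      then have "M - Suc l = Suc (M - Suc (Suc l))" by simp
      then show ?thesis unfolding fL_def using True up[of "M - Suc (Suc l)"] by simp
    qed (simp add: fL_def nonneg)
  qed
  have "decseq fR" unfolding fR_def using down by (intro decseq_SucI) simp
  have fL_nonneg: "fL l \<ge> 0" and fR_nonneg: "fR l \<ge> 0" for l
    unfolding fL_def fR_def using nonneg by simp_all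
  have fL_vanish: "fL l = 0" and fR_vanish: "fR l = 0" if "l > m" for l
    unfolding fL_def fR_def using that \<open>M \<le> m\<close> vanish by simp_all
  have "fL 0 \<le> g M"
    using up[of "M - 1"] nonneg[of M] unfolding fL_def by (cases M) simp_all
  define A where "A = (\<Sum>l\<le>m. if int Q dvd int l - (int M - 1 - r) then fL l else 0)"
  define B where "B = (\<Sum>l\<le>m. if int Q dvd int l - (r - int M) then fR l else 0)"
  have class_sum: "(\<Sum>k\<le>m. if int Q dvd int k - r then g k else 0) = A + B"
    unfolding A_def B_def fL_def fR_def by (rule sum_residue_class_split_reflect[OF \<open>M \<le> m\<close> vanish])
  have total: "(\<Sum>k\<le>m. g k) = (\<Sum>l\<le>m. fL l) + (\<Sum>l\<le>m. fR l)"
    unfolding fL_def fR_def by (rule sum_atMost_split_reflect[OF \<open>M \<le> m\<close> vanish])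
  have "\<bar>real Q * A - (\<Sum>l\<le>m. fL l)\<bar> \<le> real Q * g M"
    using sum_residue_class_decreasing[OF Q \<open>decseq fL\<close> fL_nonneg fL_vanish,
        where c = "int M - 1 - r"]
      \<open>fL 0 \<le> g M\<close> unfolding A_def by (meson mult_left_mono of_nat_0_le_iff order_trans)
  moreover have "\<bar>real Q * B - (\<Sum>l\<le>m. fR l)\<bar> \<le> real Q * g M"
    using sum_residue_class_decreasing[OF Q \<open>decseq fR\<close> fR_nonneg fR_vanish, where c = "r - int M"]
    unfolding B_def fR_def by simp
  ultimately show ?thesis unfolding class_sum total by (simp add: algebra_simps abs_le_iff)
qed


section \<open>The binomial distribution\<close>

definition binomial_weight :: "real \<Rightarrow> nat \<Rightarrow> nat \<Rightarrow> real" where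
  "binomial_weight a m k = real (m choose k) * a ^ k * (1 - a) ^ (m - k)"

definition binomial_mode :: "real \<Rightarrow> nat \<Rightarrow> nat" where
  "binomial_mode a m = nat \<lfloor>real (Suc m) * a\<rfloor>"

lemma binomial_weight_nonneg: "0 \<le> a \<Longrightarrow> a \<le> 1 \<Longrightarrow> binomial_weight a m k \<ge> 0"
  unfolding binomial_weight_def by simp

lemma binomial_weight_eq_0: "m < k \<Longrightarrow> binomial_weight a m k = 0"
  unfolding binomial_weight_def by simp

lemma sum_binomial_weight: "(\<Sum>k\<le>m. binomial_weight a m k) = 1"
  using binomial_ring[of a "1 - a" m] unfolding binomial_weight_def by simp

lemma binomial_weight_le_1:
  assumes "0 \<le> a" "a \<le> 1"
  shows "binomial_weight a m k \<le> 1"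
proof (cases "k \<le> m")
  case True
  then have "binomial_weight a m k \<le> (\<Sum>k\<le>m. binomial_weight a m k)"
    using assms binomial_weight_nonneg by (intro member_le_sum) auto
  then show ?thesis using sum_binomial_weight by simp
qed (simp add: binomial_weight_eq_0)

lemma binomial_weight_Suc:
  assumes "k < m"
  shows "binomial_weight a m (Suc k) * (real (Suc k) * (1 - a))
           = binomial_weight a m k * (real (m - k) * a)"
proof -
  have c: "real (Suc k) * real (m choose Suc k) = real (m - k) * real (m choose k)"
    using binomial_absorption[of k m] binomial_absorb_comp[of m k] assms by (metis of_nat_mult)
  have e: "m - k = Suc (m - Suc k)" using assms by simp
  have "binomial_weight a m (Suc k) * (real (Suc k) * (1 - a))
      = (real (Suc k) * real (m choose Suc k)) * a ^ Suc k * (1 - a) ^ Suc (m - Suc k)"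
    unfolding binomial_weight_def by (simp add: algebra_simps)
  also have "\<dots> = (real (m - k) * real (m choose k)) * a ^ Suc k * (1 - a) ^ (m - k)"
    unfolding c e ..
  also have "\<dots> = binomial_weight a m k * (real (m - k) * a)"
    unfolding binomial_weight_def by (simp add: algebra_simps)
  finally show ?thesis .
qed

lemma binomial_mode_bounds:
  assumes "0 < a" "a < 1"
  shows "real (binomial_mode a m) \<le> real (Suc m) * a"
    and "real (Suc m) * a < real (binomial_mode a m) + 1"
    and "binomial_mode a m \<le> m"
proof -
  have "0 \<le> real (Suc m) * a" "real (Suc m) * a < real (Suc m)" using assms by simp_all
  then show "real (binomial_mode a m) \<le> real (Suc m) * a"
    and "real (Suc m) * a < real (binomial_mode a m) + 1"
    and "binomial_mode a m \<le> m"
    unfolding binomial_mode_def by linarith+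
qed

lemma binomial_weight_mono_below_mode:
  assumes "0 < a" "a < 1" "k < binomial_mode a m"
  shows "binomial_weight a m k \<le> binomial_weight a m (Suc k)"
proof -
  note mode = binomial_mode_bounds[OF assms(1,2), of m]
  have "k < m" using assms(3) mode(3) by simp
  have "real (Suc k) \<le> real (Suc m) * a" using assms(3) mode(1) by linarith
  then have "real (Suc k) * (1 - a) \<le> real (m - k) * a"
    using \<open>k < m\<close> by (simp add: algebra_simps)
  then have "binomial_weight a m k * (real (Suc k) * (1 - a))
      \<le> binomial_weight a m (Suc k) * (real (Suc k) * (1 - a))"
    unfolding binomial_weight_Suc[OF \<open>k < m\<close>]
    using binomial_weight_nonneg[of a m k] assms by (intro mult_left_mono) auto
  then show ?thesis using assms by (simp add: mult_le_cancel_right)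
qed

lemma binomial_weight_antimono_above_mode:
  assumes "0 < a" "a < 1" "binomial_mode a m \<le> k"
  shows "binomial_weight a m (Suc k) \<le> binomial_weight a m k"
proof (cases "k < m")
  case False
  then show ?thesis using binomial_weight_nonneg[of a m k] assms by (simp add: binomial_weight_eq_0)
next
  case True
  note mode = binomial_mode_bounds[OF assms(1,2), of m]
  have "real (Suc m) * a \<le> real (Suc k)" using assms(3) mode(2) by linarith
  then have "real (m - k) * a \<le> real (Suc k) * (1 - a)"
    using True by (simp add: algebra_simps)
  then have "binomial_weight a m (Suc k) * (real (Suc k) * (1 - a))
      \<le> binomial_weight a m k * (real (Suc k) * (1 - a))"
    unfolding binomial_weight_Suc[OF True]
    using binomial_weight_nonneg[of a m k] assms by (intro mult_left_mono) auto
  then show ?thesis using assms by (simp add: mult_le_cancel_right)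
qed

lemma binomial_weight_residue_class:
  fixes r :: int
  assumes "0 < a" "a < 1" "Q \<ge> 1"
  shows "\<bar>(\<Sum>k\<le>m. if int Q dvd int k - r then binomial_weight a m k else 0) - 1 / real Q\<bar>
           \<le> 2 * binomial_weight a m (binomial_mode a m)"
proof -
  have "\<bar>real Q * (\<Sum>k\<le>m. if int Q dvd int k - r then binomial_weight a m k else 0) - 1\<bar>
      \<le> 2 * real Q * binomial_weight a m (binomial_mode a m)"
    using sum_residue_class_unimodal[OF assms(3) binomial_mode_bounds(3)[OF assms(1,2), of m],
        where g = "binomial_weight a m" and r = r]
    using assms binomial_weight_nonneg binomial_weight_mono_below_mode
      binomial_weight_antimono_above_mode binomial_weight_eq_0
    by (simp add: sum_binomial_weight)
  moreover have "real Q > 0" using assms(3) by simp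
  ultimately show ?thesis
    by (simp add: abs_div_pos[symmetric] divide_le_eq field_simps flip: abs_mult)
qed

lemma half_le_power_if:
  fixes \<rho> :: real
  assumes "0 \<le> \<rho>" "real L * (1 - \<rho>) \<le> 1 / 2"
  shows "1 / 2 \<le> \<rho> ^ L"
  using Bernoulli_inequality[of "\<rho> - 1" L] assms by (simp add: algebra_simps)

lemma geometric_growth_le:
  fixes f :: "nat \<Rightarrow> real"
  assumes "0 \<le> \<rho>" "\<And>k. M \<le> k \<Longrightarrow> k < M + L \<Longrightarrow> \<rho> * f k \<le> f (Suc k)" "j \<le> L"
  shows "\<rho> ^ j * f M \<le> f (M + j)"
  using assms(3)
proof (induction j)
  case (Suc j)
  then have "\<rho> * (\<rho> ^ j * f M) \<le> \<rho> * f (M + j)" using assms(1) by (intro mult_left_mono) auto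
  also have "\<dots> \<le> f (M + Suc j)" using assms(2)[of "M + j"] Suc.prems by simp
  finally show ?case by simp
qed simp

lemma binomial_weight_Suc_ge:
  assumes "0 < a" "a < 1" "k < m" "0 \<le> \<rho>" "\<rho> * (real (Suc k) * (1 - a)) \<le> real (m - k) * a"
  shows "\<rho> * binomial_weight a m k \<le> binomial_weight a m (Suc k)"
proof -
  have "(\<rho> * binomial_weight a m k) * (real (Suc k) * (1 - a))
      = binomial_weight a m k * (\<rho> * (real (Suc k) * (1 - a)))" by (simp only: ac_simps)
  also have "\<dots> \<le> binomial_weight a m k * (real (m - k) * a)"
    using assms(1,2,5) binomial_weight_nonneg[of a m k] by (intro mult_left_mono) auto
  also have "\<dots> = binomial_weight a m (Suc k) * (real (Suc k) * (1 - a))"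
    using binomial_weight_Suc[OF assms(3)] by simp
  finally show ?thesis using assms(2) by (simp add: mult_le_cancel_right)
qed

lemma binomial_mode_add_le:
  assumes "0 < a" "a < 1" "L \<ge> 1" "real L ^ 2 \<le> a * (1 - a) / 2 * real m"
  shows "binomial_mode a m + L \<le> m"
proof -
  have "real L * 1 \<le> real L * real L" "1 * 1 \<le> real L * real L"
    using assms(3) by (intro mult_mono; simp)+
  then have "real L + 1 \<le> 2 * real L ^ 2" by (simp add: power2_eq_square)
  also have "\<dots> \<le> a * ((1 - a) * real m)" using assms(4) by simp
  also have "\<dots> \<le> (1 - a) * real m" using assms(1,2) by (intro mult_left_le_one_le) auto
  finally have "real (Suc m) * a + real L \<le> real m" using assms(2) by (simp add: algebra_simps)
  then show ?thesis using binomial_mode_bounds(1)[OF assms(1,2), of m] by linarith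
qed

text \<open>Up to distance L \<approx> sqrt(a(1-a)m/2) above the mode the ratio of consecutive weights stays
  at least \<rho>, where L(1 - \<rho>) \<le> 1/2; so all these weights are at least half the mode.\<close>
lemma binomial_weight_near_mode:
  assumes a: "0 < a" "a < 1" and L: "L \<ge> 1" "real L ^ 2 \<le> a * (1 - a) / 2 * real m" and "i \<le> L"
  shows "binomial_weight a m (binomial_mode a m) / 2 \<le> binomial_weight a m (binomial_mode a m + i)"
proof -
  define M where "M = binomial_mode a m"
  note mode = binomial_mode_bounds[OF a, of m, folded M_def]
  have "M + L \<le> m" using binomial_mode_add_le[OF a L] unfolding M_def .
  define D where "D = real (M + L) * (1 - a)"
  define \<rho> where "\<rho> = real (m - M - L + 1) * a / D"
  have "D > 0" unfolding D_def using L a by simp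
  have "0 \<le> \<rho>" unfolding \<rho>_def using a \<open>D > 0\<close> by simp
  have deficit: "D * (1 - \<rho>) = real M + real L - real (Suc m) * a"
    unfolding \<rho>_def D_def using \<open>D > 0\<close> \<open>M + L \<le> m\<close> by (simp add: D_def field_simps of_nat_diff)
  have "\<rho> \<le> 1"
    using deficit mode(2) L(1) \<open>D > 0\<close> by (smt (verit) mult_le_0_iff of_nat_1 of_nat_mono)
  have "a * real m \<le> real (M + L)" using mode(2) L(1) a by (simp add: algebra_simps)
  then have "a * real m * (1 - a) \<le> D" unfolding D_def using a by (intro mult_right_mono) auto
  then have "2 * real L ^ 2 \<le> D" using L(2) by (simp add: algebra_simps)
  have "D * (real L * (1 - \<rho>)) = real L * (D * (1 - \<rho>))" by (simp only: ac_simps)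
  also have "\<dots> \<le> real L * real L" using deficit mode(1) by (intro mult_left_mono) auto
  also have "\<dots> \<le> D * (1 / 2)" using \<open>2 * real L ^ 2 \<le> D\<close> by (simp add: power2_eq_square)
  finally have "real L * (1 - \<rho>) \<le> 1 / 2" using \<open>D > 0\<close> by (simp only: mult_le_cancel_left_pos)
  then have "1 / 2 \<le> \<rho> ^ L" using half_le_power_if \<open>0 \<le> \<rho>\<close> by blast
  also have "\<rho> ^ L \<le> \<rho> ^ i" using \<open>i \<le> L\<close> \<open>0 \<le> \<rho>\<close> \<open>\<rho> \<le> 1\<close> by (intro power_decreasing)
  finally have "1 / 2 * binomial_weight a m M \<le> \<rho> ^ i * binomial_weight a m M"
    using binomial_weight_nonneg[of a m M] a by (intro mult_right_mono) auto
  then have "binomial_weight a m M / 2 \<le> \<rho> ^ i * binomial_weight a m M" by simp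
  also have "\<dots> \<le> binomial_weight a m (M + i)"
  proof (rule geometric_growth_le[OF \<open>0 \<le> \<rho>\<close> _ \<open>i \<le> L\<close>])
    fix k assume k: "M \<le> k" "k < M + L"
    have "\<rho> * (real (Suc k) * (1 - a)) \<le> \<rho> * D"
      unfolding D_def using k a \<open>0 \<le> \<rho>\<close> by (intro mult_left_mono mult_right_mono) auto
    also have "\<dots> = real (m - M - L + 1) * a" unfolding \<rho>_def using \<open>D > 0\<close> by simp
    also have "\<dots> \<le> real (m - k) * a" using k \<open>M + L \<le> m\<close> a by (intro mult_right_mono) auto
    finally show "\<rho> * binomial_weight a m k \<le> binomial_weight a m (Suc k)"
      using binomial_weight_Suc_ge[OF a _ \<open>0 \<le> \<rho>\<close>] k \<open>M + L \<le> m\<close> by simp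
  qed
  finally show ?thesis unfolding M_def .
qed

lemma binomial_weight_mode_le:
  assumes a: "0 < a" "a < 1" and "m \<ge> 1"
  shows "binomial_weight a m (binomial_mode a m) \<le> 2 / sqrt (a * (1 - a) / 2 * real m)"
proof -
  define M where "M = binomial_mode a m"
  define x where "x = sqrt (a * (1 - a) / 2 * real m)"
  have "x > 0" unfolding x_def using a \<open>m \<ge> 1\<close> by simp
  define L where "L = nat \<lfloor>x\<rfloor>"
  have L: "real L \<le> x" "x < real L + 1" unfolding L_def using \<open>x > 0\<close> by linarith+
  have "binomial_weight a m M \<le> 2 / real (Suc L)"
  proof (cases "L = 0")
    case True
    then show ?thesis using binomial_weight_le_1[of a m M] a by simp
  next
    case False
    have L_sq: "real L ^ 2 \<le> a * (1 - a) / 2 * real m"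
      using L(1) \<open>x > 0\<close> power_mono[OF L(1), of 2] a unfolding x_def by simp
    have "M + L \<le> m" using binomial_mode_add_le[OF a _ L_sq] False unfolding M_def by simp
    have "(\<Sum>i\<le>L. binomial_weight a m M / 2) \<le> (\<Sum>i\<le>L. binomial_weight a m (M + i))"
      using binomial_weight_near_mode[OF a _ L_sq] False unfolding M_def by (intro sum_mono) simp
    also have "\<dots> = (\<Sum>k\<in>{M..M+L}. binomial_weight a m k)"
      using sum.shift_bounds_cl_nat_ivl[of "binomial_weight a m" 0 M L]
      by (simp add: atLeast0AtMost add.commute)
    also have "\<dots> \<le> (\<Sum>k\<le>m. binomial_weight a m k)"
      using \<open>M + L \<le> m\<close> binomial_weight_nonneg a by (intro sum_mono2) auto
    finally have "real (Suc L) * binomial_weight a m M \<le> 2" by (simp add: sum_binomial_weight)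
    then show ?thesis by (simp add: field_simps)
  qed
  also have "\<dots> \<le> 2 / x" using L(2) \<open>x > 0\<close> by (intro divide_left_mono) auto
  finally show ?thesis unfolding M_def x_def .
qed

lemma binomial_weight_residue_class_error:
  fixes r :: int
  assumes "0 < a" "a < 1" "Q \<ge> 1" "m \<ge> 1"
  shows "\<bar>(\<Sum>k\<le>m. if int Q dvd int k - r then binomial_weight a m k else 0) - 1 / real Q\<bar>
           \<le> 4 / sqrt (a * (1 - a) / 2) * real m powr (-1/2)"
proof -
  have "sqrt (a * (1 - a) / 2 * real m) = sqrt (a * (1 - a) / 2) * sqrt (real m)"
    by (rule real_sqrt_mult)
  moreover have "real m powr (-1/2) = 1 / sqrt (real m)"
    using assms(4) by (simp add: powr_minus_divide powr_half_sqrt[symmetric])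
  ultimately show ?thesis
    using binomial_weight_residue_class[OF assms(1-3), where m = m and r = r]
      binomial_weight_mode_le[OF assms(1,2,4)]
    by simp
qed


section \<open>The divisor bound\<close>

lemma card_divisors_le_prod_multiplicity:
  fixes a :: nat
  assumes "a \<ge> 1"
  shows "card {d. d dvd a} \<le> (\<Prod>p\<in>prime_factors a. Suc (multiplicity p a))"
proof -
  define P where "P = prime_factors a"
  define exps where "exps d = restrict (\<lambda>p. multiplicity p d) P" for d :: nat
  have "card {d. d dvd a} \<le> card (PiE P (\<lambda>p. {0..multiplicity p a}))"
  proof (rule card_inj_on_le)
    show "inj_on exps {d. d dvd a}"
    proof (rule inj_onI)
      fix d1 d2 assume d: "d1 \<in> {d. d dvd a}" "d2 \<in> {d. d dvd a}" and "exps d1 = exps d2"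
      have "multiplicity p d1 = multiplicity p d2" if "prime p" for p
      proof (cases "p \<in> P")
        case True
        then show ?thesis using fun_cong[OF \<open>exps d1 = exps d2\<close>, of p] unfolding exps_def by simp
      next
        case False
        then have "\<not> p dvd d1" "\<not> p dvd d2"
          using d that assms unfolding P_def by (auto simp: prime_factors_dvd dest: dvd_trans)
        then show ?thesis by (simp add: not_dvd_imp_multiplicity_0)
      qed
      moreover have "d1 \<noteq> 0" "d2 \<noteq> 0" using d assms by auto
      ultimately show "d1 = d2" using multiplicity_eq_imp_eq[of d1 d2] by simp
    qed
    show "exps ` {d. d dvd a} \<subseteq> PiE P (\<lambda>p. {0..multiplicity p a})"
      unfolding exps_def using assms by (auto simp: dvd_imp_multiplicity_le)
    show "finite (PiE P (\<lambda>p. {0..multiplicity p a}))" unfolding P_def by (intro finite_PiE) auto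
  qed
  also have "\<dots> = (\<Prod>p\<in>P. Suc (multiplicity p a))" unfolding P_def by (simp add: card_PiE)
  finally show ?thesis unfolding P_def .
qed

text \<open>Bernoulli's inequality: a prime power p^e contributes e + 1 divisors, which is at most
  (p^e)^\<delta> once p^\<delta> \<ge> 2, and at most a constant multiple of it otherwise.\<close>
lemma Suc_le_mult_powr_power:
  fixes y \<delta> :: real
  assumes "y \<ge> 2" "\<delta> > 0"
  shows "real (Suc e) \<le> (if 2 \<le> y powr \<delta> then 1 else 1 + 1 / (2 powr \<delta> - 1)) * (y powr \<delta>) ^ e"
proof (cases "2 \<le> y powr \<delta>")
  case True
  have "real (Suc e) \<le> (1 + 1) ^ e" using Bernoulli_inequality[of 1 e] by simp
  also have "\<dots> \<le> (y powr \<delta>) ^ e" using True by (intro power_mono) auto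
  finally show ?thesis using True by simp
next
  case False
  define t where "t = 2 powr \<delta> - 1"
  have "t > 0"
    unfolding t_def using assms(2) by (simp add: powr_less_cancel_iff[of 2 0 \<delta>, simplified])
  have "2 powr \<delta> \<le> y powr \<delta>" using assms by (intro powr_mono2) auto
  then have "1 + real e * t \<le> (y powr \<delta>) ^ e"
    using Bernoulli_inequality[of t e] \<open>t > 0\<close> power_mono[of "1 + t" "y powr \<delta>" e]
    unfolding t_def by simp
  moreover have "real (Suc e) \<le> (1 + 1 / t) * (1 + real e * t)"
    using \<open>t > 0\<close> by (simp add: field_simps)
  ultimately show ?thesis using False \<open>t > 0\<close> unfolding t_def
    by (simp add: order_trans[OF _ mult_left_mono])
qed

lemma prod_prime_factors_powr_power:
  fixes a :: nat
  assumes "a \<ge> 1"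
  shows "(\<Prod>p\<in>prime_factors a. (real p powr \<delta>) ^ multiplicity p a) = real a powr \<delta>"
proof -
  have "(\<Prod>p\<in>prime_factors a. (real p powr \<delta>) ^ multiplicity p a)
      = (\<Prod>p\<in>prime_factors a. (real p ^ multiplicity p a) powr \<delta>)"
  proof (rule prod.cong[OF refl])
    fix p assume "p \<in> prime_factors a"
    then have "real p > 0" using prime_gt_0_nat by auto
    then show "(real p powr \<delta>) ^ multiplicity p a = (real p ^ multiplicity p a) powr \<delta>"
      by (simp add: powr_realpow[symmetric] powr_powr powr_power mult.commute)
  qed
  also have "\<dots> = (\<Prod>p\<in>prime_factors a. real p ^ multiplicity p a) powr \<delta>"
    by (rule prod_powr_distrib[symmetric])
  also have "(\<Prod>p\<in>prime_factors a. real p ^ multiplicity p a) = real a"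
    using prime_factorization_nat[of a] assms by (simp flip: of_nat_power of_nat_prod)
  finally show ?thesis .
qed

lemma less_nat_ceiling_if_powr_less:
  assumes "\<delta> > 0" "real p powr \<delta> < 2"
  shows "p < nat \<lceil>2 powr (1 / \<delta>)\<rceil>"
proof -
  have "(real p powr \<delta>) powr (1 / \<delta>) < 2 powr (1 / \<delta>)"
    using assms by (intro powr_less_mono2) auto
  then have "real p < 2 powr (1 / \<delta>)" using assms(1) by (simp add: powr_powr)
  then have "real p < of_int \<lceil>2 powr (1 / \<delta>)\<rceil>" using le_of_int_ceiling by (rule less_le_trans)
  then have "int p < \<lceil>2 powr (1 / \<delta>)\<rceil>" by (metis of_int_of_nat_eq of_int_less_iff)
  then show ?thesis by simp
qed

lemma divisor_count_le_powr:
  fixes \<delta> :: real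
  assumes "\<delta> > 0"
  shows "\<exists>C\<ge>1. \<forall>a::nat. a \<ge> 1 \<longrightarrow> real (card {d. d dvd a}) \<le> C * real a powr \<delta>"
proof -
  define K where "K = 1 + 1 / (2 powr \<delta> - 1)"
  have "1 < 2 powr \<delta>" using assms by (simp add: powr_less_cancel_iff[of 2 0 \<delta>, simplified])
  then have "K \<ge> 1" unfolding K_def by simp
  define T where "T = nat \<lceil>2 powr (1 / \<delta>)\<rceil>"
  define c where "c p = (if 2 \<le> real p powr \<delta> then 1 else K)" for p :: nat
  have small: "{p. \<not> 2 \<le> real p powr \<delta>} \<subseteq> {..<T}"
    unfolding T_def using less_nat_ceiling_if_powr_less[OF assms] by auto
  show ?thesis
  proof (intro exI[of _ "K ^ T"] conjI allI impI)
    show "K ^ T \<ge> 1" using \<open>K \<ge> 1\<close> by simp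
    fix a :: nat assume "a \<ge> 1"
    define P where "P = prime_factors a"
    have "real (card {d. d dvd a}) \<le> (\<Prod>p\<in>P. real (Suc (multiplicity p a)))"
      using card_divisors_le_prod_multiplicity[OF \<open>a \<ge> 1\<close>] unfolding P_def of_nat_prod[symmetric]
      by (simp only: of_nat_le_iff)
    also have "\<dots> \<le> (\<Prod>p\<in>P. c p * (real p powr \<delta>) ^ multiplicity p a)"
    proof (rule prod_mono)
      fix p assume "p \<in> P"
      then have "real p \<ge> 2" using prime_ge_2_nat unfolding P_def by fastforce
      then show "0 \<le> real (Suc (multiplicity p a))
          \<and> real (Suc (multiplicity p a)) \<le> c p * (real p powr \<delta>) ^ multiplicity p a"
        using Suc_le_mult_powr_power[OF _ assms] unfolding c_def K_def by simp
    qed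
    also have "\<dots> = (\<Prod>p\<in>P. c p) * real a powr \<delta>"
      unfolding prod.distrib P_def prod_prime_factors_powr_power[OF \<open>a \<ge> 1\<close>] ..
    also have "(\<Prod>p\<in>P. c p) = K ^ card {p\<in>P. \<not> 2 \<le> real p powr \<delta>}"
      unfolding c_def P_def by (simp add: prod.If_cases Int_def)
    also have "\<dots> \<le> K ^ T"
    proof (rule power_increasing[OF _ \<open>K \<ge> 1\<close>])
      have "card {p\<in>P. \<not> 2 \<le> real p powr \<delta>} \<le> card {..<T}" using small by (intro card_mono) auto
      then show "card {p\<in>P. \<not> 2 \<le> real p powr \<delta>} \<le> T" by simp
    qed
    finally show "real (card {d. d dvd a}) \<le> K ^ T * real a powr \<delta>"
      by (simp add: mult_right_mono)
  qed
qed


section \<open>Simultaneous congruences and divisor tuples\<close>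

lemma simultaneous_dvd_iff_prod_dvd:
  fixes q :: "'a \<Rightarrow> nat" and t :: "'a \<Rightarrow> int"
  assumes "finite A" and coprime: "\<forall>i\<in>A. \<forall>j\<in>A. i \<noteq> j \<longrightarrow> coprime (q i) (q j)"
    and "\<forall>i\<in>A. q i \<ge> 1"
  shows "\<exists>r. \<forall>k::int. (\<forall>j\<in>A. int (q j) dvd k - t j) \<longleftrightarrow> int (\<Prod>j\<in>A. q j) dvd k - r"
proof -
  obtain x where x: "\<forall>i\<in>A. [x = nat (t i mod int (q i))] (mod q i)"
    using chinese_remainder_nat[where u = "\<lambda>i. nat (t i mod int (q i))", OF assms(1) coprime]
    by blast
  have x_cong: "[int x = t j] (mod int (q j))" if "j \<in> A" for j
  proof -
    have "[int x = int (nat (t j mod int (q j)))] (mod int (q j))"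
      using x that by (simp only: cong_int_iff)
    also have "int (nat (t j mod int (q j))) = t j mod int (q j)"
      using assms(3) that by (simp add: Suc_le_eq)
    also have "[t j mod int (q j) = t j] (mod int (q j))" by (simp add: cong_def)
    finally show ?thesis .
  qed
  have "(\<forall>j\<in>A. int (q j) dvd k - t j) \<longleftrightarrow> int (\<Prod>j\<in>A. q j) dvd k - int x" for k
  proof -
    have "(\<forall>j\<in>A. int (q j) dvd k - t j) \<longleftrightarrow> (\<forall>j\<in>A. [k = int x] (mod int (q j)))"
      using x_cong by (meson cong_iff_dvd_diff cong_sym cong_trans)
    also have "\<dots> \<longleftrightarrow> [k = int x] (mod (\<Prod>j\<in>A. int (q j)))"
      using coprime cong_dvd_modulus[OF _ dvd_prodI[OF assms(1)]]
      by (auto intro: cong_cong_prod_coprime)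
    finally show ?thesis by (simp add: cong_iff_dvd_diff)
  qed
  then show ?thesis by blast
qed

lemma binomial_weight_simultaneous_congruences_error:
  fixes q :: "'a \<Rightarrow> nat" and t :: "'a \<Rightarrow> int"
  assumes "0 < a" "a < 1" "m \<ge> 1" "finite A"
    and "\<forall>i\<in>A. \<forall>j\<in>A. i \<noteq> j \<longrightarrow> coprime (q i) (q j)" "\<forall>i\<in>A. q i \<ge> 1"
  shows "\<bar>(\<Sum>k\<le>m. if \<forall>j\<in>A. int (q j) dvd int k - t j then binomial_weight a m k else 0)
            - 1 / real (\<Prod>j\<in>A. q j)\<bar>
           \<le> 4 / sqrt (a * (1 - a) / 2) * real m powr (-1/2)"
proof -
  obtain r where r: "\<And>k::int. (\<forall>j\<in>A. int (q j) dvd k - t j) \<longleftrightarrow> int (\<Prod>j\<in>A. q j) dvd k - r"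
    using simultaneous_dvd_iff_prod_dvd[OF assms(4-6)] by blast
  have "(\<Prod>j\<in>A. q j) \<ge> 1" using assms(6) by (simp add: Suc_le_eq prod_pos)
  then show ?thesis
    unfolding r using binomial_weight_residue_class_error[OF assms(1,2) _ assms(3)] by blast
qed

lemma prod_if_eq_if_all:
  fixes f :: "'a \<Rightarrow> 'b::comm_semiring_1"
  assumes "finite A"
  shows "(\<Prod>j\<in>A. if P j then f j else 0) = (if \<forall>j\<in>A. P j then \<Prod>j\<in>A. f j else 0)"
proof (cases "\<forall>j\<in>A. P j")
  case False
  then obtain j where "j \<in> A" "\<not> P j" by auto
  then show ?thesis using assms False by (intro trans[OF prod_zero]) auto
qed simp

definition divisor_tuples :: "nat \<Rightarrow> nat \<Rightarrow> (nat \<Rightarrow> int) \<Rightarrow> int \<Rightarrow> (nat \<Rightarrow> nat) set" where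
  "divisor_tuples b1 J s n = PiE {..<J} (\<lambda>j. {d. d \<ge> 1 \<and> int d ^ b1 dvd n - s j})"

definition coprime_divisor_tuples :: "nat \<Rightarrow> nat \<Rightarrow> (nat \<Rightarrow> int) \<Rightarrow> int \<Rightarrow> (nat \<Rightarrow> nat) set" where
  "coprime_divisor_tuples b1 J s n =
     {dd \<in> divisor_tuples b1 J s n. \<forall>j1<J. \<forall>j2<J. j1 \<noteq> j2 \<longrightarrow> coprime (dd j1) (dd j2)}"

lemma fbs_eq_sum_coprime_divisor_tuples:
  "fbs b1 b2 J s n = (\<Sum>dd\<in>coprime_divisor_tuples b1 J s n.
      real_of_int (\<Prod>j<J. moebius_mu (dd j)) / real (\<Prod>j<J. dd j) ^ b2)"
proof -
  have "{d \<in> {..<J} \<rightarrow>\<^sub>E {1..}. (\<forall>j<J. int (d j) ^ b1 dvd n - s j) \<and>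
          (\<forall>j1<J. \<forall>j2<J. j1 \<noteq> j2 \<longrightarrow> coprime (d j1) (d j2))} = coprime_divisor_tuples b1 J s n"
    unfolding coprime_divisor_tuples_def divisor_tuples_def by (auto simp: PiE_iff)
  then show ?thesis unfolding fbs_def by simp
qed

lemma finite_divisor_tuples:
  assumes "b1 \<ge> 1" "\<forall>j<J. n \<noteq> s j"
  shows "finite (divisor_tuples b1 J s n)"
  unfolding divisor_tuples_def using assms by (intro finite_PiE finite_pow_dvd) auto

lemma indicator_gcdb_eq_1_expansion:
  assumes "b1 \<ge> 1" "b2 \<ge> 1" "\<forall>j<J. n \<noteq> s j"
  shows "(if \<forall>j<J. gcdb b1 b2 (n - s j) (y - t j) = 1 then 1 else 0)
       = (\<Sum>dd\<in>divisor_tuples b1 J s n.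
            if \<forall>j<J. int (dd j) ^ b2 dvd y - t j then \<Prod>j<J. moebius_mu (dd j) else 0)"
proof -
  define D where "D j = {d::nat. d \<ge> 1 \<and> int d ^ b1 dvd n - s j}" for j
  have factor: "(if gcdb b1 b2 (n - s j) (y - t j) = 1 then 1 else 0)
      = (\<Sum>d\<in>D j. if int d ^ b2 dvd y - t j then moebius_mu d else 0)" if "j < J" for j
    using sum_moebius_gcdb[of "n - s j" b1 b2 "y - t j"] assms that
      finite_pow_dvd[of "n - s j" b1] unfolding D_def
    by (simp add: sum.inter_filter[symmetric])
  have "(if \<forall>j<J. gcdb b1 b2 (n - s j) (y - t j) = 1 then 1 else 0)
      = (\<Prod>j<J. if gcdb b1 b2 (n - s j) (y - t j) = 1 then 1 else 0 :: int)"
  proof (cases "\<forall>j<J. gcdb b1 b2 (n - s j) (y - t j) = 1")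
    case False
    then show ?thesis by (simp add: prod_if_eq_if_all)
  qed simp
  also have "\<dots> = (\<Prod>j<J. \<Sum>d\<in>D j. if int d ^ b2 dvd y - t j then moebius_mu d else 0)"
  proof (rule prod.cong[OF refl])
    fix j assume "j \<in> {..<J}"
    then show "(if gcdb b1 b2 (n - s j) (y - t j) = 1 then 1 else 0)
        = (\<Sum>d\<in>D j. if int d ^ b2 dvd y - t j then moebius_mu d else 0)"
      using factor by simp
  qed
  also have "\<dots> = (\<Sum>dd\<in>divisor_tuples b1 J s n.
      \<Prod>j<J. if int (dd j) ^ b2 dvd y - t j then moebius_mu (dd j) else 0)"
    unfolding divisor_tuples_def D_def using assms(1,3) finite_pow_dvd
    by (intro prod_sum_PiE) simp_all
  also have "\<dots> = (\<Sum>dd\<in>divisor_tuples b1 J s n.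
      if \<forall>j<J. int (dd j) ^ b2 dvd y - t j then \<Prod>j<J. moebius_mu (dd j) else 0)"
    by (simp add: prod_if_eq_if_all Ball_def)
  finally show ?thesis .
qed

lemma coprime_divisor_tuplesI:
  assumes "b1 \<ge> 1" "b2 \<ge> 1"
    and "\<forall>j1<J. \<forall>j2<J. j1 \<noteq> j2 \<longrightarrow> gcdb b1 b2 (s j1 - s j2) (t j1 - t j2) = 1"
    and "dd \<in> divisor_tuples b1 J s n" "\<forall>j<J. int (dd j) ^ b2 dvd y - t j"
  shows "dd \<in> coprime_divisor_tuples b1 J s n"
proof -
  have "coprime (dd j1) (dd j2)" if "j1 < J" "j2 < J" "j1 \<noteq> j2" for j1 j2
  proof (rule coprime_if_gcdb_diff_eq_1[OF assms(1,2)])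
    show "gcdb b1 b2 (s j1 - s j2) (t j1 - t j2) = 1" using assms(3) that by blast
    show "int (dd j1) ^ b1 dvd n - s j1" "int (dd j2) ^ b1 dvd n - s j2"
      using assms(4) that unfolding divisor_tuples_def by auto
    show "int (dd j1) ^ b2 dvd y - t j1" "int (dd j2) ^ b2 dvd y - t j2"
      using assms(5) that by auto
  qed
  then show ?thesis using assms(4) unfolding coprime_divisor_tuples_def by blast
qed

lemma sum_binomial_weight_gcdb_eq_1:
  assumes "b1 \<ge> 1" "b2 \<ge> 1" "\<forall>j<J. n \<noteq> s j"
    and "\<forall>j1<J. \<forall>j2<J. j1 \<noteq> j2 \<longrightarrow> gcdb b1 b2 (s j1 - s j2) (t j1 - t j2) = 1"
  shows "(\<Sum>k | k \<le> m \<and> (\<forall>j<J. gcdb b1 b2 (n - s j) (int k - t j) = 1). binomial_weight a m k)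
       = (\<Sum>dd\<in>coprime_divisor_tuples b1 J s n. real_of_int (\<Prod>j<J. moebius_mu (dd j)) *
            (\<Sum>k\<le>m. if \<forall>j<J. int (dd j) ^ b2 dvd int k - t j then binomial_weight a m k else 0))"
proof -
  define cond where "cond dd k \<longleftrightarrow> (\<forall>j<J. int (dd j) ^ b2 dvd int k - t j)"
    for dd :: "nat \<Rightarrow> nat" and k
  define mu where "mu dd = real_of_int (\<Prod>j<J. moebius_mu (dd j))" for dd :: "nat \<Rightarrow> nat"
  define good where "good k \<longleftrightarrow> (\<forall>j<J. gcdb b1 b2 (n - s j) (int k - t j) = 1)" for k :: nat
  let ?DT = "divisor_tuples b1 J s n" and ?CT = "coprime_divisor_tuples b1 J s n"
  have "{k. k \<le> m \<and> good k} = {k\<in>{..m}. good k}" by auto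
  then have "(\<Sum>k | k \<le> m \<and> good k. binomial_weight a m k)
      = (\<Sum>k\<le>m. if good k then binomial_weight a m k else 0)"
    by (simp only: sum.inter_filter[OF finite_atMost])
  also have "\<dots> = (\<Sum>k\<le>m. binomial_weight a m k * real_of_int (if good k then 1 else 0))"
    by (intro sum.cong) auto
  also have "\<dots> = (\<Sum>k\<le>m. \<Sum>dd\<in>?DT. if cond dd k then mu dd * binomial_weight a m k else 0)"
    unfolding good_def indicator_gcdb_eq_1_expansion[OF assms(1-3)] cond_def mu_def
    by (simp add: sum_distrib_left if_distrib mult.commute cong: if_cong)
  also have "\<dots> = (\<Sum>dd\<in>?DT. \<Sum>k\<le>m. if cond dd k then mu dd * binomial_weight a m k else 0)"
    by (rule sum.swap)
  also have "\<dots> = (\<Sum>dd\<in>?CT. \<Sum>k\<le>m. if cond dd k then mu dd * binomial_weight a m k else 0)"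
  proof (rule sum.mono_neutral_right)
    show "finite ?DT" using finite_divisor_tuples[OF assms(1,3)] .
    show "?CT \<subseteq> ?DT" unfolding coprime_divisor_tuples_def by auto
    show "\<forall>dd\<in>?DT - ?CT. (\<Sum>k\<le>m. if cond dd k then mu dd * binomial_weight a m k else 0) = 0"
    proof
      fix dd assume "dd \<in> ?DT - ?CT"
      then have "\<not> cond dd k" for k
        using coprime_divisor_tuplesI[OF assms(1,2,4), of dd n "int k"] unfolding cond_def by blast
      then show "(\<Sum>k\<le>m. if cond dd k then mu dd * binomial_weight a m k else 0) = 0" by simp
    qed
  qed
  finally show ?thesis
    unfolding good_def cond_def mu_def by (simp add: sum_distrib_left if_distrib cong: if_cong)
qed

lemma card_divisor_tuples_le:
  fixes C \<delta> :: real
  assumes "b1 \<ge> 1" "J \<ge> 1" "\<delta> \<ge> 0" "\<forall>j<J. \<bar>s j\<bar> < n"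
    and divisor_bound: "\<And>a::nat. a \<ge> 1 \<Longrightarrow> real (card {d. d dvd a}) \<le> C * real a powr \<delta>"
  shows "real (card (divisor_tuples b1 J s n)) \<le> (C * 2 powr \<delta>) ^ J * real_of_int n powr (J * \<delta>)"
proof -
  have n_pos: "n > 0" if "j < J" for j using assms(4) that by fastforce
  have "real (card {d. d \<ge> 1 \<and> int d ^ b1 dvd n - s j}) \<le> C * 2 powr \<delta> * real_of_int n powr \<delta>"
    if "j < J" for j
  proof -
    define A where "A = nat (n - s j)"
    have "A \<ge> 1" "real A \<le> 2 * real_of_int n" "n - s j = int A"
      unfolding A_def using assms(4) that by auto
    have "{d. d \<ge> 1 \<and> int d ^ b1 dvd n - s j} \<subseteq> {d. d dvd A}"
    proof
      fix d assume "d \<in> {d. d \<ge> 1 \<and> int d ^ b1 dvd n - s j}"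
      then have "int d dvd n - s j" using assms(1) dvd_trans[OF dvd_power[of b1 "int d"]] by auto
      then show "d \<in> {d. d dvd A}" unfolding \<open>n - s j = int A\<close> by simp
    qed
    then have "card {d. d \<ge> 1 \<and> int d ^ b1 dvd n - s j} \<le> card {d. d dvd A}"
      using \<open>A \<ge> 1\<close> by (intro card_mono) auto
    then have "real (card {d. d \<ge> 1 \<and> int d ^ b1 dvd n - s j}) \<le> C * real A powr \<delta>"
      using divisor_bound[OF \<open>A \<ge> 1\<close>] by linarith
    also have "\<dots> \<le> C * (2 * real_of_int n) powr \<delta>"
    proof -
      have "C \<ge> 0" using divisor_bound[of 1] by simp
      then show ?thesis using \<open>real A \<le> 2 * real_of_int n\<close> \<open>A \<ge> 1\<close> assms(3)
        by (intro mult_left_mono powr_mono2) auto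
    qed
    also have "\<dots> = C * 2 powr \<delta> * real_of_int n powr \<delta>"
      using n_pos[OF that] by (simp add: powr_mult)
    finally show ?thesis .
  qed
  then have "(\<Prod>j<J. real (card {d. d \<ge> 1 \<and> int d ^ b1 dvd n - s j}))
      \<le> (\<Prod>j<J. C * 2 powr \<delta> * real_of_int n powr \<delta>)"
    by (intro prod_mono) auto
  then have "real (card (divisor_tuples b1 J s n)) \<le> (\<Prod>j<J. C * 2 powr \<delta> * real_of_int n powr \<delta>)"
    unfolding divisor_tuples_def by (simp add: card_PiE)
  also have "\<dots> \<le> (C * 2 powr \<delta>) ^ J * real_of_int n powr (J * \<delta>)"
    using n_pos[of 0] assms(2) by (simp add: power_mult_distrib powr_power)
  finally show ?thesis .
qed

lemma binomial_weight_coprime_divisor_tuple_error: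
  assumes "0 < a" "a < 1" "m \<ge> 1" "dd \<in> coprime_divisor_tuples b1 J s n"
  shows "\<bar>(\<Sum>k\<le>m. if \<forall>j<J. int (dd j) ^ b2 dvd int k - t j then binomial_weight a m k else 0)
            - 1 / real (\<Prod>j<J. dd j) ^ b2\<bar>
           \<le> 4 / sqrt (a * (1 - a) / 2) * real m powr (-1/2)"
proof -
  have "\<forall>i\<in>{..<J}. \<forall>j\<in>{..<J}. i \<noteq> j \<longrightarrow> coprime (dd i ^ b2) (dd j ^ b2)"
    "\<forall>i\<in>{..<J}. dd i ^ b2 \<ge> 1"
    using assms(4) unfolding coprime_divisor_tuples_def divisor_tuples_def
    by (auto simp: PiE_iff Suc_le_eq)
  from binomial_weight_simultaneous_congruences_error[OF assms(1-3) finite_lessThan this, of t]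
  show ?thesis by (simp add: prod_power_distrib Ball_def)
qed

lemma sum_binomial_gcdb_eq_1_minus_fbs_le:
  assumes "b1 \<ge> 1" "b2 \<ge> 1" "0 < a" "a < 1" "m \<ge> 1" "\<forall>j<J. n \<noteq> s j"
    and "\<forall>j1<J. \<forall>j2<J. j1 \<noteq> j2 \<longrightarrow> gcdb b1 b2 (s j1 - s j2) (t j1 - t j2) = 1"
  shows "\<bar>(\<Sum>k | k \<le> m \<and> (\<forall>j<J. gcdb b1 b2 (n - s j) (int k - t j) = 1).
              real (m choose k) * a ^ k * (1 - a) ^ (m - k)) - fbs b1 b2 J s n\<bar>
           \<le> real (card (divisor_tuples b1 J s n))
              * (4 / sqrt (a * (1 - a) / 2) * real m powr (-1/2))"
proof -
  define E where "E = 4 / sqrt (a * (1 - a) / 2) * real m powr (-1/2)"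
  define P where
    "P dd = (\<Sum>k\<le>m. if \<forall>j<J. int (dd j) ^ b2 dvd int k - t j then binomial_weight a m k else 0)"
    for dd
  define mu where "mu dd = real_of_int (\<Prod>j<J. moebius_mu (dd j))" for dd :: "nat \<Rightarrow> nat"
  let ?CT = "coprime_divisor_tuples b1 J s n"
  have "(\<Sum>k | k \<le> m \<and> (\<forall>j<J. gcdb b1 b2 (n - s j) (int k - t j) = 1).
            real (m choose k) * a ^ k * (1 - a) ^ (m - k)) - fbs b1 b2 J s n
      = (\<Sum>dd\<in>?CT. mu dd * (P dd - 1 / real (\<Prod>j<J. dd j) ^ b2))"
    using sum_binomial_weight_gcdb_eq_1[OF assms(1,2,6,7), where m = m and a = a]
    unfolding fbs_eq_sum_coprime_divisor_tuples binomial_weight_def P_def mu_def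
    by (simp add: sum_subtractf right_diff_distrib)
  also have "\<bar>\<dots>\<bar> \<le> (\<Sum>dd\<in>?CT. E)"
  proof (rule order_trans[OF sum_abs sum_mono])
    fix dd assume "dd \<in> ?CT"
    have "\<bar>mu dd\<bar> \<le> 1"
      unfolding mu_def using abs_moebius_mu_le_1 by (simp add: abs_prod prod_le_1 flip: of_int_abs)
    moreover have "\<bar>P dd - 1 / real (\<Prod>j<J. dd j) ^ b2\<bar> \<le> E"
      using binomial_weight_coprime_divisor_tuple_error[OF assms(3-5) \<open>dd \<in> ?CT\<close>, of b2 t]
      unfolding P_def E_def by simp
    ultimately have "\<bar>mu dd\<bar> * \<bar>P dd - 1 / real (\<Prod>j<J. dd j) ^ b2\<bar> \<le> 1 * E"
      by (intro mult_mono) auto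
    then show "\<bar>mu dd * (P dd - 1 / real (\<Prod>j<J. dd j) ^ b2)\<bar> \<le> E" by (simp add: abs_mult)
  qed
  also have "\<dots> \<le> real (card (divisor_tuples b1 J s n)) * E"
  proof -
    have "E \<ge> 0" unfolding E_def using assms(3,4) by simp
    moreover have "card ?CT \<le> card (divisor_tuples b1 J s n)"
      using finite_divisor_tuples[OF assms(1,6)] unfolding coprime_divisor_tuples_def
      by (intro card_mono) auto
    ultimately show ?thesis by (simp add: mult_right_mono)
  qed
  finally show ?thesis unfolding E_def .
qed

theorem lemma2p6:
  fixes b1 b2 J :: nat and \<alpha> \<epsilon> :: real
  assumes "b1 \<ge> 1" "b2 \<ge> 1" "coprime b1 b2" "J \<ge> 1"
    and "0 < \<alpha>" "\<alpha> < 1" "\<epsilon> > 0"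
  shows "\<exists>C::real. \<forall>(m::nat) (s::nat \<Rightarrow> int) (t::nat \<Rightarrow> int) (n::int).
           m \<ge> 1 \<longrightarrow>
           (\<forall>j1<J. \<forall>j2<J. j1 \<noteq> j2 \<longrightarrow> gcdb b1 b2 (s j1 - s j2) (t j1 - t j2) = 1) \<longrightarrow>
           (\<forall>j<J. \<bar>s j\<bar> < n) \<longrightarrow>
           \<bar>(\<Sum>k \<in> {k. k \<le> m \<and> (\<forall>j<J. gcdb b1 b2 (n - s j) (int k - t j) = 1)}.
                 real (m choose k) * \<alpha> ^ k * (1 - \<alpha>) ^ (m - k))
             - fbs b1 b2 J s n\<bar>
           \<le> C * real_of_int n powr \<epsilon> * real m powr (-1/2)"
proof -
  define \<delta> where "\<delta> = \<epsilon> / real J"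
  have "\<delta> > 0" "real J * \<delta> = \<epsilon>" unfolding \<delta>_def using assms(4,7) by auto
  obtain K where divisor_bound: "\<forall>a::nat. a \<ge> 1 \<longrightarrow> real (card {d. d dvd a}) \<le> K * real a powr \<delta>"
    using divisor_count_le_powr[OF \<open>\<delta> > 0\<close>] by blast
  define E where "E m = 4 / sqrt (\<alpha> * (1 - \<alpha>) / 2) * real m powr (-1/2)" for m :: nat
  have "E m \<ge> 0" for m unfolding E_def using assms(5,6) by simp
  show ?thesis
  proof (intro exI[of _ "(K * 2 powr \<delta>) ^ J * 4 / sqrt (\<alpha> * (1 - \<alpha>) / 2)"] allI impI)
    fix m :: nat and s t :: "nat \<Rightarrow> int" and n :: int
    assume "m \<ge> 1" and gcdb_st: "\<forall>j1<J. \<forall>j2<J. j1 \<noteq> j2 \<longrightarrow> gcdb b1 b2 (s j1 - s j2) (t j1 - t j2) = 1"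
      and s_lt: "\<forall>j<J. \<bar>s j\<bar> < n"
    then have "\<forall>j<J. n \<noteq> s j" by fastforce
    have "real (card (divisor_tuples b1 J s n)) * E m
        \<le> (K * 2 powr \<delta>) ^ J * real_of_int n powr \<epsilon> * E m"
      using card_divisor_tuples_le[OF assms(1,4) _ s_lt, of \<delta> K] divisor_bound \<open>\<delta> > 0\<close> \<open>E m \<ge> 0\<close>
        \<open>real J * \<delta> = \<epsilon>\<close> by (intro mult_right_mono) auto
    with sum_binomial_gcdb_eq_1_minus_fbs_le[OF assms(1,2,5,6) \<open>m \<ge> 1\<close> \<open>\<forall>j<J. n \<noteq> s j\<close> gcdb_st]
    show "\<bar>(\<Sum>k \<in> {k. k \<le> m \<and> (\<forall>j<J. gcdb b1 b2 (n - s j) (int k - t j) = 1)}.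
              real (m choose k) * \<alpha> ^ k * (1 - \<alpha>) ^ (m - k)) - fbs b1 b2 J s n\<bar>
        \<le> (K * 2 powr \<delta>) ^ J * 4 / sqrt (\<alpha> * (1 - \<alpha>) / 2)
            * real_of_int n powr \<epsilon> * real m powr (-1/2)"
      unfolding E_def by (simp add: ac_simps)
  qed
qed

end
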